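(* Let $v_1,v_2,\rho_1,\rho_2$ be strictly positive reals, define $V(R)=(\rho_1+\rho_2R)\big(v_1+\frac{v_2}{R}\big)$ for $R>0$, let $R^*=\sqrt{\frac{\rho_1 v_2}{\rho_2 v_1}}$ and $\gamma^*=V(R^* )/V(1)$. Suppose $R^*>1$ and $\alpha^{-1}R^*\le R\le\alpha R^*$ for some $\alpha>1$. Then \[ \frac{V(R)}{V(R^* )}\le\frac12+\frac{\alpha+\alpha^{-1}}{4},\qquad\text{and thus}\qquad \frac{V(R)}{V(1)}\le\Big(\frac12+\frac{\alpha+\alpha^{-1}}{4}\Big)\gamma^*. \]
   Context: Interpretation: for a nested conditional Monte Carlo estimator with $N$ outer paths and $R$ inner replications per path, with variance $\frac{v_1}{N}+\frac{v_2}{RN}$ and expected cost $N\rho_1+NR\rho_2$, at a fixed budget $C$ fully used the variance is $V(R)/C$; $R^*$ is the optimal number of inner replications (when $R^*>1$) and $R=1$ corresponds to simple Monte Carlo. *)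

theory Defs
  imports Complex_Main
begin

definition nested_V :: "real \<Rightarrow> real \<Rightarrow> real \<Rightarrow> real \<Rightarrow> real \<Rightarrow> real" where
  "nested_V v1 v2 \<rho>1 \<rho>2 R = (\<rho>1 + \<rho>2 * R) * (v1 + v2 / R)"

definition R_star :: "real \<Rightarrow> real \<Rightarrow> real \<Rightarrow> real \<Rightarrow> real" where
  "R_star v1 v2 \<rho>1 \<rho>2 = sqrt ((\<rho>1 * v2) / (\<rho>2 * v1))"

end

theory Submission
  imports Defs
begin

text \<open>With \<open>A = \<rho>1 v1 + \<rho>2 v2\<close> and \<open>B = \<rho>2 v1 R*\<close> one has
  \<open>V(R) = A + B (R/R* + R*/R)\<close>, so \<open>V(R*) = A + 2B\<close>, and \<open>A \<ge> 2B\<close> by AM-GM.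
  Since \<open>t = R/R* + R*/R\<close> lies in \<open>[2, \<alpha> + 1/\<alpha>]\<close>, the ratio \<open>(A + B t)/(A + 2B)\<close>
  is at most \<open>1/2 + t/4\<close>, the value it takes in the extreme case \<open>A = 2B\<close>.\<close>

lemma R_star_squared:
  assumes "v1 > 0" "\<rho>2 > 0" "\<rho>1 * v2 \<ge> 0"
  shows "\<rho>2 * v1 * (R_star v1 v2 \<rho>1 \<rho>2)\<^sup>2 = \<rho>1 * v2"
  using assms by (simp add: R_star_def)

lemma nested_V_eq_sum_ratio:
  assumes "v1 > 0" "v2 > 0" "\<rho>1 > 0" "\<rho>2 > 0" "R > 0"
  defines "S \<equiv> R_star v1 v2 \<rho>1 \<rho>2"
  shows "nested_V v1 v2 \<rho>1 \<rho>2 R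
           = (\<rho>1 * v1 + \<rho>2 * v2) + \<rho>2 * v1 * S * (R / S + S / R)"
proof -
  have S_sq: "\<rho>2 * v1 * S\<^sup>2 = \<rho>1 * v2"
    unfolding S_def using assms by (intro R_star_squared) auto
  have "S > 0" unfolding S_def R_star_def using assms by simp
  have "nested_V v1 v2 \<rho>1 \<rho>2 R = (\<rho>1 * v1 + \<rho>2 * v2) + \<rho>1 * v2 / R + \<rho>2 * v1 * R"
    unfolding nested_V_def using \<open>R > 0\<close> by (simp add: field_simps)
  also have "\<rho>1 * v2 / R = \<rho>2 * v1 * S * (S / R)"
    by (simp flip: S_sq add: power2_eq_square)
  also have "\<rho>2 * v1 * R = \<rho>2 * v1 * S * (R / S)"
    using \<open>S > 0\<close> by simp
  finally show ?thesis by (simp add: algebra_simps)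
qed

lemma nested_V_R_star:
  assumes "v1 > 0" "v2 > 0" "\<rho>1 > 0" "\<rho>2 > 0"
  defines "S \<equiv> R_star v1 v2 \<rho>1 \<rho>2"
  shows "nested_V v1 v2 \<rho>1 \<rho>2 S = (\<rho>1 * v1 + \<rho>2 * v2) + 2 * (\<rho>2 * v1 * S)"
proof -
  have "S > 0" unfolding S_def R_star_def using assms by simp
  then show ?thesis
    using nested_V_eq_sum_ratio[OF assms(1-4) \<open>S > 0\<close>] by (simp add: S_def)
qed

lemma R_star_cross_term_le:
  assumes "v1 > 0" "v2 > 0" "\<rho>1 > 0" "\<rho>2 > 0"
  shows "2 * (\<rho>2 * v1 * R_star v1 v2 \<rho>1 \<rho>2) \<le> \<rho>1 * v1 + \<rho>2 * v2"
proof -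
  define S where "S = R_star v1 v2 \<rho>1 \<rho>2"
  have S_sq: "\<rho>2 * v1 * S\<^sup>2 = \<rho>1 * v2"
    unfolding S_def using assms by (intro R_star_squared) auto
  have "v2 * (\<rho>1 * v1 + \<rho>2 * v2 - 2 * (\<rho>2 * v1 * S)) = \<rho>2 * (v1 * S - v2)\<^sup>2"
    by (simp flip: S_sq add: algebra_simps power2_eq_square)
  also have "\<dots> \<ge> 0" using assms by simp
  finally show ?thesis
    using assms by (simp add: S_def zero_le_mult_iff)
qed

lemma two_le_add_inverse:
  fixes x :: real
  assumes "x > 0"
  shows "2 \<le> x + inverse x"
proof -
  have "x + inverse x - 2 = (x - 1)\<^sup>2 / x"
    using assms by (simp add: field_simps power2_eq_square)
  also have "\<dots> \<ge> 0" using assms by simp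
  finally show ?thesis by simp
qed

lemma add_inverse_le_of_between_inverse:
  fixes x a :: real
  assumes "a > 0" "inverse a \<le> x" "x \<le> a"
  shows "x + inverse x \<le> a + inverse a"
proof -
  have "x > 0" using assms by (smt (verit) positive_imp_inverse_positive)
  have "1 \<le> a * x"
    using assms(2) \<open>a > 0\<close> by (simp add: field_simps)
  have "a + inverse a - (x + inverse x) = (a - x) * (a * x - 1) / (a * x)"
    using \<open>x > 0\<close> \<open>a > 0\<close> by (simp add: field_simps)
  also have "\<dots> \<ge> 0"
    using \<open>x > 0\<close> \<open>a > 0\<close> \<open>x \<le> a\<close> \<open>1 \<le> a * x\<close> by simp
  finally show ?thesis by simp
qed

lemma affine_ratio_le:
  fixes A B t c :: real
  assumes "2 * B \<le> A" "B > 0" "2 \<le> t" "t \<le> c"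
  shows "(A + B * t) / (A + 2 * B) \<le> 1/2 + c / 4"
proof -
  have pos: "A + 2 * B > 0" using assms by simp
  have "(t - 2) * (A - 2 * B) \<ge> 0" using assms by simp
  then have "A + B * t \<le> (1/2 + t / 4) * (A + 2 * B)" by (simp add: algebra_simps)
  also have "\<dots> \<le> (1/2 + c / 4) * (A + 2 * B)"
    using assms pos by (intro mult_right_mono) auto
  finally show ?thesis using pos by (simp add: divide_le_eq)
qed

theorem proposition4:
  fixes v1 v2 \<rho>1 \<rho>2 \<alpha> R :: real
  assumes "v1 > 0" and "v2 > 0" and "\<rho>1 > 0" and "\<rho>2 > 0"
    and "R_star v1 v2 \<rho>1 \<rho>2 > 1"
    and "\<alpha> > 1"
    and "R_star v1 v2 \<rho>1 \<rho>2 / \<alpha> \<le> R" and "R \<le> \<alpha> * R_star v1 v2 \<rho>1 \<rho>2"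
  shows "nested_V v1 v2 \<rho>1 \<rho>2 R / nested_V v1 v2 \<rho>1 \<rho>2 (R_star v1 v2 \<rho>1 \<rho>2)
           \<le> 1/2 + (\<alpha> + inverse \<alpha>) / 4 \<and>
         nested_V v1 v2 \<rho>1 \<rho>2 R / nested_V v1 v2 \<rho>1 \<rho>2 1
           \<le> (1/2 + (\<alpha> + inverse \<alpha>) / 4) *
              (nested_V v1 v2 \<rho>1 \<rho>2 (R_star v1 v2 \<rho>1 \<rho>2) / nested_V v1 v2 \<rho>1 \<rho>2 1)"
proof -
  define S where "S = R_star v1 v2 \<rho>1 \<rho>2"
  define V where "V = nested_V v1 v2 \<rho>1 \<rho>2"
  have "S > 0" unfolding S_def R_star_def using assms by simp
  have ratio_bounds: "inverse \<alpha> \<le> R / S" "R / S \<le> \<alpha>"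
    using assms(6-8) \<open>S > 0\<close> by (simp_all add: S_def field_simps)
  then have "R > 0" using \<open>S > 0\<close> assms(6) by (smt (verit) divide_le_0_iff inverse_positive_iff_positive)
  have t_bounds: "2 \<le> R / S + S / R" "R / S + S / R \<le> \<alpha> + inverse \<alpha>"
    using two_le_add_inverse[of "R / S"] add_inverse_le_of_between_inverse[OF _ ratio_bounds]
      \<open>R > 0\<close> \<open>S > 0\<close> assms(6) by simp_all
  have ratio_to_optimum: "V R / V S \<le> 1/2 + (\<alpha> + inverse \<alpha>) / 4"
    using affine_ratio_le[OF R_star_cross_term_le[OF assms(1-4)] _ t_bounds]
      nested_V_eq_sum_ratio[OF assms(1-4) \<open>R > 0\<close>] nested_V_R_star[OF assms(1-4)] assms
    by (simp add: V_def S_def)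
  have "V S > 0" "V 1 > 0"
    using \<open>S > 0\<close> assms by (simp_all add: V_def nested_V_def mult_pos_pos add_pos_pos)
  then have "V R / V 1 = (V R / V S) * (V S / V 1)"
    by simp
  also have "\<dots> \<le> (1/2 + (\<alpha> + inverse \<alpha>) / 4) * (V S / V 1)"
    using ratio_to_optimum \<open>V S > 0\<close> \<open>V 1 > 0\<close> by (intro mult_right_mono) auto
  finally have "V R / V 1 \<le> (1/2 + (\<alpha> + inverse \<alpha>) / 4) * (V S / V 1)" .
  with ratio_to_optimum show ?thesis by (simp add: V_def S_def)
qed

end
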